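(* Let $n\ge1$, $r\ge0$ be integers and $\lambda$ a partition with $\ell(\lambda)\le n$ and $\lambda_1\le r$. Then $(x_1\cdots x_n)^r\,\mathrm{spo}_\lambda(x_1,\dots,x_n;z)$ is a polynomial in $x_1,\dots,x_n$ (with coefficients polynomial in $z$), and \[ \left[(x_1\cdots x_n)^r\,\mathrm{spo}_\lambda(x_1,\dots,x_n;z)\right]\Big|_{x_1=0}=\begin{cases}(x_2\cdots x_n)^r\,\mathrm{spo}_{(\lambda_2,\dots,\lambda_n)}(x_2,\dots,x_n;z)&\text{if }\lambda_1=r,\\ 0&\text{otherwise.}\end{cases} \]
   Context: Here $z$ is a single indeterminate playing the role of $Y=(y_1)$ ($m=1$). $\bar x=1/x$. Orthosymplectic Schur function: order $1<\bar1<\cdots<n<\bar n<1'<\cdots<m'$; an orthosymplectic tableau of shape $\lambda$ is a filling such that the entries from $\{1,\bar1,\dots,n,\bar n\}$ form a symplectic tableau (weakly increasing along rows, strictly increasing down columns, entries in row $i$ are $\ge i$) and the remaining primed entries form a skew filling strictly increasing along rows and weakly increasing down columns; weight $\prod_i x_i^{\#i-\#\bar i}\prod_j y_j^{\#j'}$; $\mathrm{spo}_\lambda(X;Y)$ is the sum of weights. $F|_{x_1=0}$ denotes substitution $x_1=0$ in the polynomial $F$. *)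

theory Defs
  imports Complex_Main
begin

definition is_partition :: "nat list \<Rightarrow> bool" where
  "is_partition la \<longleftrightarrow> sorted_wrt (\<ge>) la \<and> (\<forall>a\<in>set la. 0 < a)"

definition first_part :: "nat list \<Rightarrow> nat" where
  "first_part la = (case la of [] \<Rightarrow> 0 | a # _ \<Rightarrow> a)"

text \<open>Young diagram, 0-indexed cells (row, column).\<close>
definition diagram :: "nat list \<Rightarrow> (nat \<times> nat) set" where
  "diagram la = {(i, j). i < length la \<and> j < la ! i}"

text \<open>Alphabet 1 < 1bar < ... < n < nbar < 1' < ... < m' encoded as naturals:
  letter i is 2i-1, letter ibar is 2i, letter j' is 2n+j.
  An orthosymplectic tableau is a filling (0 outside the diagram) such that rows and
  columns weakly increase, unprimed entries strictly increase down columns, primed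
  entries strictly increase along rows, and unprimed entries in row i (1-indexed) are
  at least i (as letters), i.e. codes at least 2i-1.\<close>
definition osp_tableaux :: "nat \<Rightarrow> nat \<Rightarrow> nat list \<Rightarrow> ((nat \<times> nat) \<Rightarrow> nat) set" where
  "osp_tableaux n m la = {T.
     (\<forall>c. c \<notin> diagram la \<longrightarrow> T c = 0) \<and>
     (\<forall>c\<in>diagram la. 1 \<le> T c \<and> T c \<le> 2*n + m) \<and>
     (\<forall>i j. (i, Suc j) \<in> diagram la \<longrightarrow>
        T (i, j) \<le> T (i, Suc j) \<and> (2*n < T (i, j) \<longrightarrow> T (i, j) < T (i, Suc j))) \<and>
     (\<forall>i j. (Suc i, j) \<in> diagram la \<longrightarrow>
        T (i, j) \<le> T (Suc i, j) \<and> (T (i, j) \<le> 2*n \<longrightarrow> T (i, j) < T (Suc i, j))) \<and>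
     (\<forall>i j. (i, j) \<in> diagram la \<longrightarrow> T (i, j) \<le> 2*n \<longrightarrow> 2*i + 1 \<le> T (i, j))}"

definition letter_count :: "nat list \<Rightarrow> ((nat \<times> nat) \<Rightarrow> nat) \<Rightarrow> nat \<Rightarrow> nat" where
  "letter_count la T a = card {c \<in> diagram la. T c = a}"

definition osp_weight :: "nat list \<Rightarrow> complex list \<Rightarrow> complex list \<Rightarrow> ((nat \<times> nat) \<Rightarrow> nat) \<Rightarrow> complex" where
  "osp_weight la xs ys T =
     (\<Prod>i<length xs. (xs ! i) ^ letter_count la T (2*i + 1)
                    * (inverse (xs ! i)) ^ letter_count la T (2*i + 2))
   * (\<Prod>j<length ys. (ys ! j) ^ letter_count la T (2 * length xs + j + 1))"

definition spo :: "nat list \<Rightarrow> complex list \<Rightarrow> complex list \<Rightarrow> complex" where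
  "spo la xs ys = (\<Sum>T\<in>osp_tableaux (length xs) (length ys) la. osp_weight la xs ys T)"

definition mpoly_eval :: "((nat \<Rightarrow> nat) \<times> nat) set \<Rightarrow> ((nat \<Rightarrow> nat) \<times> nat \<Rightarrow> complex)
                          \<Rightarrow> complex list \<Rightarrow> complex \<Rightarrow> complex" where
  "mpoly_eval S c xs z =
     (\<Sum>(\<alpha>, k)\<in>S. c (\<alpha>, k) * (\<Prod>i<length xs. (xs ! i) ^ \<alpha> i) * z ^ k)"

end

theory Submission
  imports Defs
begin

text \<open>Unprimed entries strictly increase down columns, so a barred letter \<open>ibar\<close> occurs at
  most \<open>\<lambda>\<^sub>1 \<le> r\<close> times in a tableau \<open>T\<close>; hence \<open>(x\<^sub>1\<cdots>x\<^sub>n)\<^sup>r wt(T)\<close> is the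
  monomial with exponents \<open>r + #i - #ibar\<close> in \<open>x\<^sub>i\<close> and \<open>#1'\<close> in \<open>z\<close>, and the left-hand side
  is a polynomial. The letters \<open>1\<close> and \<open>1bar\<close> can only occur in the first row, so the
  exponent of \<open>x\<^sub>1\<close> is \<open>r + #1 - #1bar \<ge> r - \<lambda>\<^sub>1\<close>; it vanishes exactly when \<open>\<lambda>\<^sub>1 = r\<close> and the
  first row is filled with \<open>1bar\<close>. Deleting such a first row and relabelling
  \<open>i, ibar\<close> as \<open>i-1, (i-1)bar\<close> is a weight-preserving bijection onto the tableaux of shape
  \<open>(\<lambda>\<^sub>2, \<lambda>\<^sub>3, \<dots>)\<close> in \<open>x\<^sub>2, \<dots>, x\<^sub>n\<close>.\<close>

lemma mem_diagram_iff: "(i, j) \<in> diagram la \<longleftrightarrow> i < length la \<and> j < la ! i"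
  by (simp add: diagram_def)

lemma finite_diagram: "finite (diagram la)"
proof -
  have "diagram la = (\<Union>i<length la. Pair i ` {..<la ! i})"
    by (auto simp: diagram_def)
  then show ?thesis by simp
qed

lemma diagram_leftD: "(i, Suc j) \<in> diagram la \<Longrightarrow> (i, j) \<in> diagram la"
  by (simp add: mem_diagram_iff)

lemma diagram_upD: "is_partition la \<Longrightarrow> (Suc i, j) \<in> diagram la \<Longrightarrow> (i, j) \<in> diagram la"
  unfolding mem_diagram_iff is_partition_def
  using sorted_wrt_nth_less[of "(\<ge>)" la i "Suc i"] by auto

lemma diagram_row0_iff: "(0, j) \<in> diagram la \<longleftrightarrow> j < first_part la"
  by (cases la) (auto simp: mem_diagram_iff first_part_def)

lemma diagram_col_less_first_part:
  "is_partition la \<Longrightarrow> (i, j) \<in> diagram la \<Longrightarrow> j < first_part la"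
  unfolding mem_diagram_iff is_partition_def first_part_def
  using sorted_wrt_nth_less[of "(\<ge>)" la 0 i]
  by (cases la; cases i) (auto, meson nth_mem order.strict_trans2)

lemma diagram_tl_iff: "(i, j) \<in> diagram (tl la) \<longleftrightarrow> (Suc i, j) \<in> diagram la"
  by (cases la) (auto simp: mem_diagram_iff)

lemma is_partition_tl: "is_partition la \<Longrightarrow> is_partition (tl la)"
  by (cases la) (auto simp: is_partition_def)

lemma first_part_tl_le: "is_partition la \<Longrightarrow> first_part (tl la) \<le> first_part la"
  by (cases la; cases "tl la") (auto simp: is_partition_def first_part_def)

lemma finite_osp_tableaux: "finite (osp_tableaux n m la)"
proof -
  have "osp_tableaux n m la \<subseteq>
      {T. \<forall>c. (c \<in> diagram la \<longrightarrow> T c \<in> {..2*n + m}) \<and> (c \<notin> diagram la \<longrightarrow> T c = 0)}"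
    by (auto simp: osp_tableaux_def)
  moreover have "finite \<dots>"
    by (rule finite_set_of_finite_funs) (auto simp: finite_diagram)
  ultimately show ?thesis by (rule finite_subset)
qed

lemma
  assumes "T \<in> osp_tableaux n m la"
  shows osp_tableau_outside: "c \<notin> diagram la \<Longrightarrow> T c = 0"
    and osp_tableau_range: "c \<in> diagram la \<Longrightarrow> 1 \<le> T c \<and> T c \<le> 2*n + m"
    and osp_tableau_row:
      "(i, Suc j) \<in> diagram la \<Longrightarrow> T (i, j) \<le> T (i, Suc j) \<and> (2*n < T (i, j) \<longrightarrow> T (i, j) < T (i, Suc j))"
    and osp_tableau_col:
      "(Suc i, j) \<in> diagram la \<Longrightarrow> T (i, j) \<le> T (Suc i, j) \<and> (T (i, j) \<le> 2*n \<longrightarrow> T (i, j) < T (Suc i, j))"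
    and osp_tableau_lower: "(i, j) \<in> diagram la \<Longrightarrow> T (i, j) \<le> 2*n \<Longrightarrow> 2*i + 1 \<le> T (i, j)"
  using assms unfolding osp_tableaux_def by blast+

lemma osp_tableau_column_strict:
  assumes T: "T \<in> osp_tableaux n m la" and la: "is_partition la"
  shows "i < k \<Longrightarrow> (k, j) \<in> diagram la \<Longrightarrow> T (i, j) \<le> 2*n \<Longrightarrow> T (i, j) < T (k, j)"
proof (induction k)
  case 0
  then show ?case by simp
next
  case (Suc k)
  note step = osp_tableau_col[OF T Suc.prems(2)]
  show ?case
  proof (cases "i = k")
    case False
    with Suc.prems have "T (i, j) < T (k, j)"
      using Suc.IH diagram_upD[OF la] by simp
    with step show ?thesis by simp
  qed (use step Suc.prems in simp)
qed

lemma letter_count_unprimed_le_first_part: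
  assumes T: "T \<in> osp_tableaux n m la" and la: "is_partition la" and a: "a \<le> 2*n"
  shows "letter_count la T a \<le> first_part la"
proof -
  let ?A = "{c \<in> diagram la. T c = a}"
  have same_row: "i = k" if "(i, j) \<in> ?A" and "(k, j) \<in> ?A" for i k j
  proof (rule ccontr)
    assume "i \<noteq> k"
    then consider "i < k" | "k < i" by linarith
    then show False
    proof cases
      case 1
      then show False using that a osp_tableau_column_strict[OF T la, of i k j] by simp
    next
      case 2
      then show False using that a osp_tableau_column_strict[OF T la, of k i j] by simp
    qed
  qed
  have inj: "inj_on snd ?A"
  proof (rule inj_onI)
    fix c d assume "c \<in> ?A" "d \<in> ?A" "snd c = snd d"
    then show "c = d" using same_row[of "fst c" "snd c" "fst d"] by (cases c, cases d) auto
  qed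
  have sub: "snd ` ?A \<subseteq> {..<first_part la}"
    using diagram_col_less_first_part[OF la] by (auto simp: prod_eq_iff)
  have "letter_count la T a \<le> card {..<first_part la}"
    unfolding letter_count_def by (rule card_inj_on_le[OF inj sub]) simp
  then show ?thesis by simp
qed

lemma osp_tableau_row0_of_le_2:
  assumes "T \<in> osp_tableaux n m la" and "1 \<le> n" and "(i, j) \<in> diagram la" and "T (i, j) \<le> 2"
  shows "i = 0"
  using osp_tableau_lower[OF assms(1,3)] assms(2,4) by linarith

lemma osp_tableau_small_letters_in_row0:
  assumes T: "T \<in> osp_tableaux n m la" and n: "1 \<le> n" and a: "a \<le> 2"
  shows "{c \<in> diagram la. T c = a} \<subseteq> Pair 0 ` {..<first_part la}"
proof
  fix c assume c: "c \<in> {c \<in> diagram la. T c = a}"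
  obtain i j where ij: "c = (i, j)" by (cases c)
  have "i = 0" using osp_tableau_row0_of_le_2[OF T n, of i j] c ij a by simp
  with c ij show "c \<in> Pair 0 ` {..<first_part la}" using diagram_row0_iff by auto
qed

lemma card_Pair_image_lessThan: "card (Pair i ` {..<k}) = k"
  by (subst card_image) (auto simp: inj_on_def)

lemma letter_count_1_add_2_le:
  assumes T: "T \<in> osp_tableaux n m la" and n: "1 \<le> n"
  shows "letter_count la T 1 + letter_count la T 2 \<le> first_part la"
proof -
  note sub = osp_tableau_small_letters_in_row0[OF T n]
  have "letter_count la T 1 + letter_count la T 2
      = card ({c \<in> diagram la. T c = 1} \<union> {c \<in> diagram la. T c = 2})"
    unfolding letter_count_def
    by (rule card_Un_disjoint[symmetric]) (auto simp: finite_diagram)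
  also have "\<dots> \<le> card (Pair (0::nat) ` {..<first_part la})"
    using sub[of 1] sub[of 2] by (intro card_mono) auto
  finally show ?thesis by (simp only: card_Pair_image_lessThan)
qed

lemma letter_count_2_eq_first_part_iff:
  assumes T: "T \<in> osp_tableaux n m la" and n: "1 \<le> n"
  shows "letter_count la T 2 = first_part la \<longleftrightarrow> (\<forall>j<first_part la. T (0, j) = 2)"
proof -
  let ?A = "{c \<in> diagram la. T c = 2}" and ?R = "Pair (0::nat) ` {..<first_part la}"
  have sub: "?A \<subseteq> ?R"
    using osp_tableau_small_letters_in_row0[OF T n] by simp
  have "letter_count la T 2 = first_part la \<longleftrightarrow> ?A = ?R"
  proof
    assume "letter_count la T 2 = first_part la"
    then show "?A = ?R"
      using card_subset_eq[OF finite_imageI sub] unfolding letter_count_def card_Pair_image_lessThan by simp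
  qed (simp add: letter_count_def card_Pair_image_lessThan)
  also have "\<dots> \<longleftrightarrow> (\<forall>j<first_part la. T (0, j) = 2)"
  proof
    assume eq: "?A = ?R"
    show "\<forall>j<first_part la. T (0, j) = 2"
    proof (intro allI impI)
      fix j assume "j < first_part la"
      then have "(0, j) \<in> ?A" unfolding eq by simp
      then show "T (0, j) = 2" by simp
    qed
  next
    assume "\<forall>j<first_part la. T (0, j) = 2"
    then have "?R \<subseteq> ?A" using diagram_row0_iff by auto
    with sub show "?A = ?R" by (rule antisym)
  qed
  finally show ?thesis .
qed

definition monomial :: "complex list \<Rightarrow> complex \<Rightarrow> (nat \<Rightarrow> nat) \<times> nat \<Rightarrow> complex" where
  "monomial xs z p = (\<Prod>i<length xs. xs ! i ^ fst p i) * z ^ snd p"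

lemma mpoly_eval_image:
  assumes "finite A"
  shows "mpoly_eval (f ` A) (\<lambda>p. of_nat (card {x \<in> A. f x = p})) xs z
       = (\<Sum>x\<in>A. monomial xs z (f x))"
proof -
  have "(\<Sum>x\<in>A. monomial xs z (f x)) = (\<Sum>p\<in>f ` A. \<Sum>x\<in>{x \<in> A. f x = p}. monomial xs z (f x))"
    by (rule sum.image_gen[OF assms])
  also have "\<dots> = (\<Sum>p\<in>f ` A. of_nat (card {x \<in> A. f x = p}) * monomial xs z p)"
    by (rule sum.cong) auto
  finally show ?thesis
    unfolding mpoly_eval_def monomial_def by (simp add: case_prod_beta mult.assoc)
qed

lemma monomial_Cons_0:
  "monomial (0 # ys) z p = (if fst p 0 = 0 then monomial ys z (\<lambda>i. fst p (Suc i), snd p) else 0)"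
  unfolding monomial_def by (simp add: prod.lessThan_Suc_shift del: prod.lessThan_Suc)

text \<open>Exponents of \<open>(x\<^sub>1\<cdots>x\<^sub>n)\<^sup>r wt(T)\<close>, with \<open>x\<^sub>i\<close> indexed from \<open>0\<close>; the truncated
  subtraction is exact by \<open>letter_count_unprimed_le_first_part\<close>.\<close>
definition osp_exponent ::
    "nat \<Rightarrow> nat \<Rightarrow> nat list \<Rightarrow> ((nat \<times> nat) \<Rightarrow> nat) \<Rightarrow> (nat \<Rightarrow> nat) \<times> nat" where
  "osp_exponent r n la T =
     ((\<lambda>i. r + letter_count la T (2*i + 1) - letter_count la T (2*i + 2)),
      letter_count la T (2*n + 1))"

lemma power_mult_power_inverse:
  fixes x :: complex
  assumes "x \<noteq> 0" and "b \<le> r + a"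
  shows "x ^ r * (x ^ a * inverse x ^ b) = x ^ (r + a - b)"
proof -
  have "x ^ r * x ^ a = x ^ (r + a - b) * x ^ b"
    using assms(2) by (simp add: power_add[symmetric])
  then show ?thesis using assms(1) by (simp add: power_inverse field_simps)
qed

lemma prod_list_power_mult_osp_weight:
  assumes T: "T \<in> osp_tableaux (length xs) 1 la" and la: "is_partition la"
    and r: "first_part la \<le> r" and nz: "\<forall>x\<in>set xs. x \<noteq> 0"
  shows "prod_list xs ^ r * osp_weight la xs [z] T = monomial xs z (osp_exponent r (length xs) la T)"
proof -
  let ?n = "length xs" and ?a = "\<lambda>i. letter_count la T (2*i + 1)"
    and ?b = "\<lambda>i. letter_count la T (2*i + 2)"
  have factor: "xs ! i ^ r * (xs ! i ^ ?a i * inverse (xs ! i) ^ ?b i) = xs ! i ^ (r + ?a i - ?b i)"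
    if "i < ?n" for i
    using that nz letter_count_unprimed_le_first_part[OF T la, of "2*i + 2"] r
    by (intro power_mult_power_inverse) auto
  have "prod_list xs ^ r * osp_weight la xs [z] T
     = (\<Prod>i<?n. xs ! i ^ r * (xs ! i ^ ?a i * inverse (xs ! i) ^ ?b i)) * z ^ letter_count la T (2*?n + 1)"
    unfolding osp_weight_def prod.list_conv_set_nth
    by (simp add: atLeast0LessThan prod_power_distrib prod.distrib)
  also have "\<dots> = monomial xs z (osp_exponent r ?n la T)"
    unfolding monomial_def using factor by (simp add: osp_exponent_def)
  finally show ?thesis .
qed

lemma osp_exponent_0_eq_0_iff:
  assumes T: "T \<in> osp_tableaux n 1 la" and n: "1 \<le> n" and r: "first_part la \<le> r"
  shows "fst (osp_exponent r n la T) 0 = 0 \<longleftrightarrow> first_part la = r \<and> (\<forall>j<first_part la. T (0, j) = 2)"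
proof -
  have "fst (osp_exponent r n la T) 0 = r + letter_count la T 1 - letter_count la T 2"
    by (simp add: osp_exponent_def numeral_2_eq_2)
  then have "fst (osp_exponent r n la T) 0 = 0 \<longleftrightarrow> first_part la = r \<and> letter_count la T 2 = first_part la"
    using letter_count_1_add_2_le[OF T n] r by linarith
  then show ?thesis
    using letter_count_2_eq_first_part_iff[OF T n] by simp
qed

lemma osp_tableau_below_row0_ge_3:
  assumes T: "T \<in> osp_tableaux n m la" and n: "1 \<le> n" and c: "(Suc i, j) \<in> diagram la"
  shows "3 \<le> T (Suc i, j)"
  using osp_tableau_lower[OF T c] n by (cases "T (Suc i, j) \<le> 2*n") auto

definition drop_first_row :: "nat list \<Rightarrow> ((nat \<times> nat) \<Rightarrow> nat) \<Rightarrow> (nat \<times> nat) \<Rightarrow> nat" where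
  "drop_first_row la T = (\<lambda>(i, j). if (Suc i, j) \<in> diagram la then T (Suc i, j) - 2 else 0)"

definition add_bar_row :: "nat list \<Rightarrow> ((nat \<times> nat) \<Rightarrow> nat) \<Rightarrow> (nat \<times> nat) \<Rightarrow> nat" where
  "add_bar_row la T = (\<lambda>(i, j). if (i, j) \<in> diagram la then if i = 0 then 2 else T (i - 1, j) + 2 else 0)"

lemma drop_first_row_apply:
  "drop_first_row la T (i, j) = (if (Suc i, j) \<in> diagram la then T (Suc i, j) - 2 else 0)"
  by (simp add: drop_first_row_def)

lemma add_bar_row_apply_0: "add_bar_row la T (0, j) = (if (0, j) \<in> diagram la then 2 else 0)"
  by (simp add: add_bar_row_def)

lemma add_bar_row_apply_Suc:
  "add_bar_row la T (Suc i, j) = (if (Suc i, j) \<in> diagram la then T (i, j) + 2 else 0)"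
  by (simp add: add_bar_row_def)

text \<open>Entries below the first row are at least \<open>3\<close>, so lowering them by \<open>2\<close> relabels
  \<open>i, ibar, j'\<close> as \<open>i-1, (i-1)bar, j'\<close> in the alphabet with \<open>n - 1\<close> unprimed pairs.\<close>
lemma drop_first_row_mem:
  assumes T: "T \<in> osp_tableaux n m la" and la: "is_partition la" and n: "1 \<le> n"
  shows "drop_first_row la T \<in> osp_tableaux (n - 1) m (tl la)"
proof -
  note ge3 = osp_tableau_below_row0_ge_3[OF T n]
  show ?thesis
    unfolding osp_tableaux_def
  proof (intro CollectI conjI allI impI ballI)
    fix c assume "c \<notin> diagram (tl la)"
    then show "drop_first_row la T c = 0" by (cases c) (simp add: drop_first_row_apply diagram_tl_iff)
  next
    fix c assume "c \<in> diagram (tl la)"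
    then obtain i j where c: "c = (i, j)" and d: "(Suc i, j) \<in> diagram la"
      by (cases c) (auto simp: diagram_tl_iff)
    show "1 \<le> drop_first_row la T c" "drop_first_row la T c \<le> 2*(n - 1) + m"
      using ge3[OF d] osp_tableau_range[OF T d] n by (simp_all add: c d drop_first_row_apply)
  next
    fix i j assume "(i, Suc j) \<in> diagram (tl la)"
    then have d: "(Suc i, Suc j) \<in> diagram la" and d': "(Suc i, j) \<in> diagram la"
      using diagram_leftD by (auto simp: diagram_tl_iff)
    show "drop_first_row la T (i, j) \<le> drop_first_row la T (i, Suc j)"
      and "2*(n - 1) < drop_first_row la T (i, j) \<Longrightarrow>
           drop_first_row la T (i, j) < drop_first_row la T (i, Suc j)"
      using ge3[OF d] ge3[OF d'] osp_tableau_row[OF T d] n by (auto simp: d d' drop_first_row_apply)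
  next
    fix i j assume "(Suc i, j) \<in> diagram (tl la)"
    then have d: "(Suc (Suc i), j) \<in> diagram la" and d': "(Suc i, j) \<in> diagram la"
      using diagram_upD[OF la] by (auto simp: diagram_tl_iff)
    show "drop_first_row la T (i, j) \<le> drop_first_row la T (Suc i, j)"
      and "drop_first_row la T (i, j) \<le> 2*(n - 1) \<Longrightarrow>
           drop_first_row la T (i, j) < drop_first_row la T (Suc i, j)"
      using ge3[OF d] ge3[OF d'] osp_tableau_col[OF T d] n by (auto simp: d d' drop_first_row_apply)
  next
    fix i j assume "(i, j) \<in> diagram (tl la)" "drop_first_row la T (i, j) \<le> 2*(n - 1)"
    then have d: "(Suc i, j) \<in> diagram la" and "T (Suc i, j) \<le> 2*n"
      using ge3 n by (auto simp: diagram_tl_iff drop_first_row_apply)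
    then show "2*i + 1 \<le> drop_first_row la T (i, j)"
      using osp_tableau_lower[OF T d] by (simp add: drop_first_row_apply)
  qed
qed

text \<open>The code \<open>2\<close> is the letter \<open>1bar\<close>.\<close>
definition osp_tableaux_bar_row :: "nat \<Rightarrow> nat \<Rightarrow> nat list \<Rightarrow> ((nat \<times> nat) \<Rightarrow> nat) set" where
  "osp_tableaux_bar_row n m la = {T \<in> osp_tableaux n m la. \<forall>j<first_part la. T (0, j) = 2}"

lemma add_bar_row_mem:
  assumes T: "T \<in> osp_tableaux (n - 1) m (tl la)" and la: "is_partition la" and n: "1 \<le> n"
  shows "add_bar_row la T \<in> osp_tableaux_bar_row n m la"
proof -
  have "add_bar_row la T \<in> osp_tableaux n m la"
    unfolding osp_tableaux_def
  proof (intro CollectI conjI allI impI ballI)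
    fix c assume "c \<notin> diagram la"
    then show "add_bar_row la T c = 0" by (cases c) (simp add: add_bar_row_def)
  next
    fix c assume c: "c \<in> diagram la"
    show "1 \<le> add_bar_row la T c" "add_bar_row la T c \<le> 2*n + m"
    proof (atomize (full), cases c)
      case (Pair i j)
      with c n show "1 \<le> add_bar_row la T c \<and> add_bar_row la T c \<le> 2*n + m"
        using osp_tableau_range[OF T, of "(i - 1, j)"]
        by (cases i) (auto simp: add_bar_row_apply_0 add_bar_row_apply_Suc diagram_tl_iff)
    qed
  next
    fix i j assume d: "(i, Suc j) \<in> diagram la"
    show "add_bar_row la T (i, j) \<le> add_bar_row la T (i, Suc j)"
      and "2*n < add_bar_row la T (i, j) \<Longrightarrow> add_bar_row la T (i, j) < add_bar_row la T (i, Suc j)"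
      using d diagram_leftD[OF d] osp_tableau_row[OF T, of "i - 1" j] n
      by (cases i; auto simp: add_bar_row_apply_0 add_bar_row_apply_Suc diagram_tl_iff)+
  next
    fix i j assume d: "(Suc i, j) \<in> diagram la"
    show "add_bar_row la T (i, j) \<le> add_bar_row la T (Suc i, j)"
      and "add_bar_row la T (i, j) \<le> 2*n \<Longrightarrow> add_bar_row la T (i, j) < add_bar_row la T (Suc i, j)"
      using d diagram_upD[OF la d] osp_tableau_col[OF T, of "i - 1" j] osp_tableau_range[OF T, of "(i, j)"] n
      by (cases i; auto simp: add_bar_row_apply_0 add_bar_row_apply_Suc diagram_tl_iff)+
  next
    fix i j assume d: "(i, j) \<in> diagram la" and "add_bar_row la T (i, j) \<le> 2*n"
    then show "2*i + 1 \<le> add_bar_row la T (i, j)"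
      using osp_tableau_lower[OF T, of "i - 1" j] n
      by (cases i) (auto simp: add_bar_row_apply_0 add_bar_row_apply_Suc diagram_tl_iff)
  qed
  then show ?thesis
    by (simp add: osp_tableaux_bar_row_def add_bar_row_apply_0 diagram_row0_iff)
qed

lemma add_bar_row_drop_first_row:
  assumes T: "T \<in> osp_tableaux_bar_row n m la" and n: "1 \<le> n"
  shows "add_bar_row la (drop_first_row la T) = T"
proof
  fix c :: "nat \<times> nat"
  obtain i j where c: "c = (i, j)" by (cases c)
  have T': "T \<in> osp_tableaux n m la" and row0: "\<forall>j<first_part la. T (0, j) = 2"
    using T by (simp_all add: osp_tableaux_bar_row_def)
  show "add_bar_row la (drop_first_row la T) c = T c"
    using osp_tableau_outside[OF T', of c] osp_tableau_below_row0_ge_3[OF T' n, of "i - 1" j] row0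
    by (cases i) (auto simp: c add_bar_row_apply_0 add_bar_row_apply_Suc drop_first_row_apply diagram_row0_iff)
qed

lemma drop_first_row_add_bar_row:
  assumes T: "T \<in> osp_tableaux (n - 1) m (tl la)"
  shows "drop_first_row la (add_bar_row la T) = T"
proof
  fix c :: "nat \<times> nat"
  obtain i j where c: "c = (i, j)" by (cases c)
  show "drop_first_row la (add_bar_row la T) c = T c"
    using osp_tableau_outside[OF T, of c]
    by (auto simp: c drop_first_row_apply add_bar_row_apply_Suc diagram_tl_iff)
qed

lemma bij_betw_drop_first_row:
  assumes "is_partition la" and "1 \<le> n"
  shows "bij_betw (drop_first_row la) (osp_tableaux_bar_row n m la) (osp_tableaux (n - 1) m (tl la))"
proof (rule bij_betw_byWitness[where f' = "add_bar_row la"])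
  show "drop_first_row la ` osp_tableaux_bar_row n m la \<subseteq> osp_tableaux (n - 1) m (tl la)"
    using drop_first_row_mem assms by (auto simp: osp_tableaux_bar_row_def)
qed (use add_bar_row_drop_first_row drop_first_row_add_bar_row add_bar_row_mem assms in auto)

lemma letter_count_drop_first_row:
  assumes T: "T \<in> osp_tableaux_bar_row n m la" and n: "1 \<le> n" and a: "1 \<le> a"
  shows "letter_count (tl la) (drop_first_row la T) a = letter_count la T (a + 2)"
proof -
  have T': "T \<in> osp_tableaux n m la" and row0: "\<forall>j<first_part la. T (0, j) = 2"
    using T by (simp_all add: osp_tableaux_bar_row_def)
  let ?down = "\<lambda>(i, j). (Suc i, j)"
  have cells: "{c \<in> diagram la. T c = a + 2} = ?down ` {c \<in> diagram (tl la). drop_first_row la T c = a}"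
  proof (intro equalityI subsetI)
    fix c assume c: "c \<in> {c \<in> diagram la. T c = a + 2}"
    obtain i j where ij: "c = (i, j)" by (cases c)
    have "i \<noteq> 0"
    proof
      assume "i = 0"
      with c ij have "j < first_part la" and "T (0, j) = a + 2" by (auto simp: diagram_row0_iff)
      with row0 a show False by simp
    qed
    then obtain k where "i = Suc k" by (cases i) auto
    with c ij show "c \<in> ?down ` {c \<in> diagram (tl la). drop_first_row la T c = a}"
      by (force simp: drop_first_row_apply diagram_tl_iff)
  next
    fix c assume "c \<in> ?down ` {c \<in> diagram (tl la). drop_first_row la T c = a}"
    then obtain i j where "c = (Suc i, j)" "(Suc i, j) \<in> diagram la" "T (Suc i, j) - 2 = a"
      by (auto simp: drop_first_row_apply diagram_tl_iff)
    then show "c \<in> {c \<in> diagram la. T c = a + 2}"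
      using osp_tableau_below_row0_ge_3[OF T' n, of i j] by auto
  qed
  have inj: "inj_on ?down A" for A by (auto simp: inj_on_def)
  show ?thesis unfolding letter_count_def cells card_image[OF inj] ..
qed

lemma osp_exponent_drop_first_row:
  assumes T: "T \<in> osp_tableaux_bar_row n m la" and n: "1 \<le> n"
  shows "osp_exponent r (n - 1) (tl la) (drop_first_row la T)
       = (\<lambda>i. fst (osp_exponent r n la T) (Suc i), snd (osp_exponent r n la T))"
proof -
  have "2*(n - 1) + 1 + 2 = 2*n + 1" using n by simp
  then show ?thesis
    using letter_count_drop_first_row[OF T n, of "2*_ + 1"] letter_count_drop_first_row[OF T n, of "2*_ + 2"]
      letter_count_drop_first_row[OF T n, of "2*(n - 1) + 1"]
    by (simp add: osp_exponent_def fun_eq_iff algebra_simps)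
qed

lemma prod_list_power_mult_spo:
  assumes "is_partition la" and "first_part la \<le> r" and "\<forall>x\<in>set xs. x \<noteq> 0"
  shows "prod_list xs ^ r * spo la xs [z]
       = (\<Sum>T\<in>osp_tableaux (length xs) 1 la. monomial xs z (osp_exponent r (length xs) la T))"
  unfolding spo_def sum_distrib_left
  using prod_list_power_mult_osp_weight[OF _ assms] by (intro sum.cong) simp_all

lemma sum_osp_monomials_Cons_0:
  assumes la: "is_partition la" and n: "1 \<le> n" and r: "first_part la \<le> r"
    and ys: "length ys = n - 1" "\<forall>y\<in>set ys. y \<noteq> 0"
  shows "(\<Sum>T\<in>osp_tableaux n 1 la. monomial (0 # ys) z (osp_exponent r n la T))
       = (if first_part la = r then prod_list ys ^ r * spo (tl la) ys [z] else 0)"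
proof (cases "first_part la = r")
  case True
  have "(\<Sum>T\<in>osp_tableaux n 1 la. monomial (0 # ys) z (osp_exponent r n la T))
      = (\<Sum>T\<in>osp_tableaux_bar_row n 1 la.
           monomial ys z (\<lambda>i. fst (osp_exponent r n la T) (Suc i), snd (osp_exponent r n la T)))"
    unfolding osp_tableaux_bar_row_def sum.inter_filter[OF finite_osp_tableaux] monomial_Cons_0
    using osp_exponent_0_eq_0_iff[OF _ n r] True by (intro sum.cong) auto
  also have "\<dots> = (\<Sum>T\<in>osp_tableaux_bar_row n 1 la.
      monomial ys z (osp_exponent r (n - 1) (tl la) (drop_first_row la T)))"
    using osp_exponent_drop_first_row[OF _ n] by simp
  also have "\<dots> = (\<Sum>T\<in>osp_tableaux (n - 1) 1 (tl la). monomial ys z (osp_exponent r (n - 1) (tl la) T))"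
    by (rule sum.reindex_bij_betw[OF bij_betw_drop_first_row[OF la n]])
  also have "\<dots> = prod_list ys ^ r * spo (tl la) ys [z]"
    using prod_list_power_mult_spo[OF is_partition_tl[OF la] _ ys(2)] first_part_tl_le[OF la] r ys(1)
    by simp
  finally show ?thesis using True by simp
next
  case False
  have "monomial (0 # ys) z (osp_exponent r n la T) = 0" if "T \<in> osp_tableaux n 1 la" for T
    using osp_exponent_0_eq_0_iff[OF that n r] False by (simp add: monomial_Cons_0)
  with False show ?thesis by simp
qed

theorem lemma4p3:
  fixes n r :: nat and la :: "nat list"
  assumes "1 \<le> n" and "is_partition la" and "length la \<le> n" and "first_part la \<le> r"
  shows "\<exists>S c. finite S \<and>
     (\<forall>xs z. length xs = n \<longrightarrow> (\<forall>x\<in>set xs. x \<noteq> 0) \<longrightarrow>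
        prod_list xs ^ r * spo la xs [z] = mpoly_eval S c xs z) \<and>
     (\<forall>ys z. length ys = n - 1 \<longrightarrow> (\<forall>y\<in>set ys. y \<noteq> 0) \<longrightarrow>
        mpoly_eval S c (0 # ys) z =
          (if first_part la = r then prod_list ys ^ r * spo (tl la) ys [z] else 0))"
proof -
  let ?Tab = "osp_tableaux n 1 la" and ?e = "osp_exponent r n la"
  define S where "S = ?e ` ?Tab"
  define c where "c = (\<lambda>p. of_nat (card {T \<in> ?Tab. ?e T = p}) :: complex)"
  have eval: "mpoly_eval S c xs z = (\<Sum>T\<in>?Tab. monomial xs z (?e T))" for xs z
    unfolding S_def c_def by (rule mpoly_eval_image[OF finite_osp_tableaux])
  show ?thesis
  proof (intro exI conjI allI impI)
    show "finite S" unfolding S_def by (simp add: finite_osp_tableaux)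
  next
    fix xs :: "complex list" and z assume "length xs = n" "\<forall>x\<in>set xs. x \<noteq> 0"
    then show "prod_list xs ^ r * spo la xs [z] = mpoly_eval S c xs z"
      using prod_list_power_mult_spo[OF assms(2,4)] eval by auto
  next
    fix ys :: "complex list" and z assume "length ys = n - 1" "\<forall>y\<in>set ys. y \<noteq> 0"
    then show "mpoly_eval S c (0 # ys) z =
        (if first_part la = r then prod_list ys ^ r * spo (tl la) ys [z] else 0)"
      unfolding eval using sum_osp_monomials_Cons_0[OF assms(2,1,4)] by blast
  qed
qed

end
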